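(* Let $\Gamma\in\mathbb{R}^{p\times p}$ be a connected continuous-time interconnection, let $r\in\mathbb{R}^p$ satisfy $r^T\Gamma=0$, $r^T\mathbf 1=1$, and let $\Omega\in\mathbb{R}^{p\times p}$ be symmetric positive definite with $(\Gamma-\mathbf 1r^T)^T\Omega+\Omega(\Gamma-\mathbf 1r^T)=-I_p$. Then for every Riemann-integrable $Q:\mathbb{R}_{\ge0}\to\mathcal Q_n$, the solutions of $\dot x_i=Q_t\sum_{j\ne i}\gamma_{ij}(x_j-x_i)$, $i=1,\dots,p$, satisfy for all $t\ge0$ and all $i$ $$|x_i(t)-\bar x|\le\Big(\frac{\sigma_{\max}(\Omega)}{\sigma_{\min}(\Omega)}\sum_{j=1}^p|x_j(0)-\bar x|^2\Big)^{1/2},$$ where $\bar x:=(r^T\otimes I_n)\mathbf x(0)$ and $\mathbf x=[x_1^T\cdots x_p^T]^T$.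
   Context: $|\cdot|$ Euclidean norm; $\mathbf 1$ all-ones vector; $\otimes$ Kronecker product; $\sigma_{\max},\sigma_{\min}$ largest/smallest singular values; $\mathcal Q_n$ symmetric positive semidefinite $n\times n$ matrices. A continuous-time interconnection is $\Gamma=[\gamma_{ij}]$ with $\gamma_{ij}\ge0$ ($i\ne j$), $\gamma_{ii}=-\sum_{j\ne i}\gamma_{ij}$; its graph has directed edge $(n_i,n_j)$ iff $\gamma_{ij}>0$; connected means some node is reachable by a directed path from every other node. *)

theory Defs
  imports "HOL-Analysis.Analysis"
begin

definition ct_interconnection :: "real^'p^'p \<Rightarrow> bool" where
  "ct_interconnection G \<longleftrightarrow>
     (\<forall>i j. i \<noteq> j \<longrightarrow> G$i$j \<ge> 0) \<and>
     (\<forall>i. G$i$i = - (\<Sum>j\<in>UNIV - {i}. G$i$j))"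

definition ic_edge :: "real^'p^'p \<Rightarrow> 'p \<Rightarrow> 'p \<Rightarrow> bool" where
  "ic_edge G i j \<longleftrightarrow> G$i$j > 0"

definition ic_connected :: "real^'p^'p \<Rightarrow> bool" where
  "ic_connected G \<longleftrightarrow> (\<exists>k. \<forall>i. (ic_edge G)\<^sup>*\<^sup>* i k)"

definition sym_matrix :: "real^'n^'n \<Rightarrow> bool" where
  "sym_matrix A \<longleftrightarrow> transpose A = A"

definition pos_semidef :: "real^'n^'n \<Rightarrow> bool" where
  "pos_semidef A \<longleftrightarrow> sym_matrix A \<and> (\<forall>v. v \<bullet> (A *v v) \<ge> 0)"

definition pos_def :: "real^'n^'n \<Rightarrow> bool" where
  "pos_def A \<longleftrightarrow> sym_matrix A \<and> (\<forall>v. v \<noteq> 0 \<longrightarrow> v \<bullet> (A *v v) > 0)"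

definition singular_values :: "real^'n^'n \<Rightarrow> real set" where
  "singular_values A = {sqrt e | e. \<exists>v. v \<noteq> 0 \<and> (transpose A ** A) *v v = e *\<^sub>R v}"

definition sigma_max :: "real^'n^'n \<Rightarrow> real" where
  "sigma_max A = Max (singular_values A)"

definition sigma_min :: "real^'n^'n \<Rightarrow> real" where
  "sigma_min A = Min (singular_values A)"

definition riemann_integrable_on ::
    "(real \<Rightarrow> 'a::real_normed_vector) \<Rightarrow> real set \<Rightarrow> bool" where
  "riemann_integrable_on f S \<longleftrightarrow>
     (\<exists>I. \<forall>e>0. \<exists>\<delta>>0. \<forall>D. D tagged_division_of S \<and> (\<forall>(x,K)\<in>D. diameter K < \<delta>)
        \<longrightarrow> norm ((\<Sum>(x,K)\<in>D. Henstock_Kurzweil_Integration.content K *\<^sub>R f x) - I) < e)"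

end

theory Submission
  imports Defs
begin

(* Stack the states x_1, ..., x_p as the rows of a matrix X :: real^'n^'p. The equations then read
   X' = Gamma X Q_t, and r^T X stays equal to the consensus value xbar = r^T X(0) because
   r^T Gamma = 0. Since Gamma 1 = 0, the error E = X - 1 r^T X(0) obeys E' = A E Q_t with
   A = Gamma - 1 r^T. Formally, V = <E, Omega E> has V' = 2 <E, Omega A E Q_t> = - tr (E Q_t E^T) <= 0
   by the Lyapunov equation and Q_t >= 0; as Q is only Riemann integrable (which is used solely to
   bound it), monotonicity of V is shown without derivatives, from increments of order h^2 over
   intervals of length h. Then sigma_min |E(t)|^2 <= V(t) <= V(0) <= sigma_max |E(0)|^2, using that
   the extreme eigenvalues of the positive definite Omega are singular values. *)

section \<open>Extreme eigenvalues of symmetric matrices\<close>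

lemma sym_matrix_inner_commute:
  assumes "sym_matrix M"
  shows "v \<bullet> (M *v w) = w \<bullet> (M *v v)"
proof -
  have "v v* M = M *v v"
    using assms vector_transpose_matrix[of v M] by (simp add: sym_matrix_def)
  then show ?thesis by (metis dot_lmul_matrix inner_commute)
qed

lemma pos_semidef_form_eq_0_imp_mult_eq_0:
  assumes M: "pos_semidef M" and w: "w \<bullet> (M *v w) = 0"
  shows "M *v w = 0"
proof -
  have sym: "sym_matrix M" and psd: "\<And>v. 0 \<le> v \<bullet> (M *v v)"
    using M by (simp_all add: pos_semidef_def)
  define z where "z = M *v w"
  define a where "a = z \<bullet> z"
  define c where "c = z \<bullet> (M *v z)"
  have c: "0 \<le> c" unfolding c_def by (rule psd)
  have line: "0 \<le> s * (s * c - 2 * a)" for s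
  proof -
    have "0 \<le> (w - s *\<^sub>R z) \<bullet> (M *v (w - s *\<^sub>R z))" by (rule psd)
    also have "\<dots> = s * (s * c - 2 * a)"
      using w sym_matrix_inner_commute[OF sym, of w z]
      by (simp add: a_def c_def z_def matrix_vector_mult_diff_distrib matrix_vector_mult_scaleR
          inner_diff_left inner_diff_right algebra_simps)
    finally show ?thesis .
  qed
  have "a \<le> 0"
  proof (rule ccontr)
    assume "\<not> a \<le> 0"
    define s where "s = a / (c + 1)"
    have "0 < s" using \<open>\<not> a \<le> 0\<close> c by (simp add: s_def)
    then have "2 * a \<le> s * c" using line[of s] by (simp add: zero_le_mult_iff)
    also have "s * c \<le> a"
      using \<open>\<not> a \<le> 0\<close> c by (simp add: s_def field_simps)
    finally show False using \<open>\<not> a \<le> 0\<close> by simp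
  qed
  then have "z \<bullet> z = 0" using inner_ge_zero[of z] by (simp add: a_def)
  then show ?thesis by (simp add: z_def)
qed

lemma sym_matrix_min_eigenpair:
  assumes sym: "sym_matrix M"
  obtains w \<mu> where "w \<noteq> 0" "M *v w = \<mu> *\<^sub>R w" "\<And>v. \<mu> * (v \<bullet> v) \<le> v \<bullet> (M *v v)"
proof -
  have "continuous_on (sphere 0 1) (\<lambda>v. v \<bullet> (M *v v))"
    by (intro continuous_intros)
  moreover have "sphere (0 :: real^'a) 1 \<noteq> {}" by simp
  ultimately obtain w where w: "w \<in> sphere 0 1"
    and min: "\<forall>v\<in>sphere 0 1. w \<bullet> (M *v w) \<le> v \<bullet> (M *v v)"
    using continuous_attains_inf[OF compact_sphere] by blast
  define \<mu> where "\<mu> = w \<bullet> (M *v w)"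
  have bound: "\<mu> * (v \<bullet> v) \<le> v \<bullet> (M *v v)" for v
  proof (cases "v = 0")
    case False
    have "v /\<^sub>R norm v \<in> sphere 0 1" using False by simp
    then have "\<mu> \<le> (v /\<^sub>R norm v) \<bullet> (M *v (v /\<^sub>R norm v))"
      unfolding \<mu>_def using min by blast
    also have "\<dots> = (v \<bullet> (M *v v)) / (v \<bullet> v)"
      by (simp add: matrix_vector_mult_scaleR dot_square_norm power2_eq_square divide_inverse)
    finally show ?thesis using False by (simp add: le_divide_eq)
  qed simp
  define N where "N = M - \<mu> *\<^sub>R mat 1"
  have Nv: "N *v v = M *v v - \<mu> *\<^sub>R v" for v
    by (simp add: N_def matrix_vector_mult_diff_rdistrib scaleR_matrix_vector_assoc[symmetric])
  have "sym_matrix N"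
    using sym by (simp add: sym_matrix_def N_def transpose_def vec_eq_iff mat_def)
  moreover have "0 \<le> v \<bullet> (N *v v)" for v using bound[of v] by (simp add: Nv inner_diff_right)
  ultimately have "pos_semidef N" by (simp add: pos_semidef_def)
  moreover have "w \<bullet> (N *v w) = 0" using w by (simp add: Nv inner_diff_right \<mu>_def dot_square_norm)
  ultimately have "N *v w = 0" by (rule pos_semidef_form_eq_0_imp_mult_eq_0)
  then have "M *v w = \<mu> *\<^sub>R w" by (simp add: Nv)
  moreover have "w \<noteq> 0" using w by auto
  ultimately show ?thesis using that bound by blast
qed

lemma sym_matrix_finite_eigenvalues:
  assumes sym: "sym_matrix M"
  shows "finite {e. \<exists>v. v \<noteq> 0 \<and> M *v v = e *\<^sub>R v}"
proof -
  define E where "E = {e. \<exists>v. v \<noteq> 0 \<and> M *v v = e *\<^sub>R v}"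
  define u where "u e = (SOME v. v \<noteq> 0 \<and> M *v v = e *\<^sub>R v)" for e
  have u: "u e \<noteq> 0" "M *v u e = e *\<^sub>R u e" if "e \<in> E" for e
    using someI_ex[OF that[unfolded E_def mem_Collect_eq]] by (simp_all add: u_def)
  have inj: "inj_on u E"
  proof (rule inj_onI)
    fix e f assume e: "e \<in> E" and f: "f \<in> E" and eq: "u e = u f"
    have "e *\<^sub>R u e = f *\<^sub>R u e" using u(2)[OF e] u(2)[OF f] eq by auto
    then show "e = f" using u(1)[OF e] by simp
  qed
  have orth: "pairwise orthogonal (u ` E)"
  proof (rule pairwise_imageI)
    fix e f assume e: "e \<in> E" and f: "f \<in> E" and "e \<noteq> f"
    have "e * (u f \<bullet> u e) = f * (u e \<bullet> u f)"
      using sym_matrix_inner_commute[OF sym, of "u f" "u e"] by (simp add: u(2)[OF e] u(2)[OF f])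
    with \<open>e \<noteq> f\<close> show "orthogonal (u e) (u f)" by (simp add: orthogonal_def inner_commute)
  qed
  have "0 \<notin> u ` E" using u(1) by auto
  with orth have "independent (u ` E)" by (rule pairwise_orthogonal_independent)
  then have "finite (u ` E)" by (rule independent_imp_finite)
  then have "finite E" using inj by (rule finite_imageD)
  then show ?thesis by (simp add: E_def)
qed

lemma finite_singular_values: "finite (singular_values A)"
proof -
  have "sym_matrix (transpose A ** A)"
    by (simp add: sym_matrix_def matrix_transpose_mul)
  then have "finite (sqrt ` {e. \<exists>v. v \<noteq> 0 \<and> (transpose A ** A) *v v = e *\<^sub>R v})"
    by (intro finite_imageI sym_matrix_finite_eigenvalues)
  moreover have "singular_values A = sqrt ` {e. \<exists>v. v \<noteq> 0 \<and> (transpose A ** A) *v v = e *\<^sub>R v}"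
    unfolding singular_values_def by auto
  ultimately show ?thesis by simp
qed

lemma nonneg_eigenvalue_in_singular_values:
  assumes "sym_matrix A" "v \<noteq> 0" "A *v v = \<mu> *\<^sub>R v" "0 \<le> \<mu>"
  shows "\<mu> \<in> singular_values A"
proof -
  have "(transpose A ** A) *v v = \<mu>\<^sup>2 *\<^sub>R v"
    using assms(1,3) by (simp only: sym_matrix_def matrix_vector_mul_assoc[symmetric])
      (simp add: matrix_vector_mult_scaleR power2_eq_square)
  moreover have "\<mu> = sqrt (\<mu>\<^sup>2)" using assms(4) by simp
  ultimately show ?thesis unfolding singular_values_def using assms(2) by blast
qed

lemma pos_def_singular_values_pos:
  assumes "pos_def A" "s \<in> singular_values A"
  shows "0 < s"
proof -
  obtain e v where s: "s = sqrt e" and v: "v \<noteq> 0" "(transpose A ** A) *v v = e *\<^sub>R v"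
    using assms(2) unfolding singular_values_def by blast
  have sym: "sym_matrix A" using assms(1) by (simp add: pos_def_def)
  then have "A *v (A *v v) = e *\<^sub>R v"
    using v(2) by (simp only: sym_matrix_def matrix_vector_mul_assoc)
  then have "e * (v \<bullet> v) = (A *v v) \<bullet> (A *v v)"
    using sym_matrix_inner_commute[OF sym, of v "A *v v"] by simp
  moreover have "A *v v \<noteq> 0" using assms(1) v(1) by (auto simp: pos_def_def)
  ultimately have "0 < e" using v(1) by (metis inner_gt_zero_iff zero_less_mult_pos2)
  then show ?thesis using s by simp
qed

lemma pos_def_min_eigenvalue:
  assumes "pos_def A"
  obtains \<mu> where "\<mu> \<in> singular_values A" "\<And>v. \<mu> * (v \<bullet> v) \<le> v \<bullet> (A *v v)"
proof -
  have sym: "sym_matrix A" using assms by (simp add: pos_def_def)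
  obtain w \<mu> where w: "w \<noteq> 0" "A *v w = \<mu> *\<^sub>R w" and min: "\<And>v. \<mu> * (v \<bullet> v) \<le> v \<bullet> (A *v v)"
    using sym_matrix_min_eigenpair[OF sym] by blast
  have "0 < w \<bullet> (A *v w)" using assms w(1) by (simp add: pos_def_def)
  then have "0 < \<mu> * (w \<bullet> w)" using w(2) by simp
  then have "0 \<le> \<mu>" using w(1) zero_less_mult_pos2[of \<mu> "w \<bullet> w"] by simp
  then show ?thesis by (rule that[OF nonneg_eigenvalue_in_singular_values[OF sym w]]) (rule min)
qed

lemma pos_def_max_eigenvalue:
  assumes "pos_def A"
  obtains \<mu> where "\<mu> \<in> singular_values A" "\<And>v. v \<bullet> (A *v v) \<le> \<mu> * (v \<bullet> v)"
proof -
  have sym: "sym_matrix A" using assms by (simp add: pos_def_def)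
  have neg: "(- A) *v v = - (A *v v)" for v
    by (simp add: vec_eq_iff matrix_vector_mult_def sum_negf)
  have "sym_matrix (- A)" using sym by (simp add: sym_matrix_def transpose_def vec_eq_iff)
  then obtain w \<mu> where w: "w \<noteq> 0" "(- A) *v w = \<mu> *\<^sub>R w"
    and min: "\<And>v. \<mu> * (v \<bullet> v) \<le> v \<bullet> ((- A) *v v)"
    using sym_matrix_min_eigenpair by blast
  have Aw: "A *v w = (- \<mu>) *\<^sub>R w" using w(2) neg[of w] by (metis minus_equation_iff scaleR_minus_left)
  have "0 < w \<bullet> (A *v w)" using assms w(1) by (simp add: pos_def_def)
  then have "0 < (- \<mu>) * (w \<bullet> w)" using Aw by simp
  then have "0 \<le> - \<mu>" using w(1) zero_less_mult_pos2[of "- \<mu>" "w \<bullet> w"] by simp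
  moreover have "v \<bullet> (A *v v) \<le> (- \<mu>) * (v \<bullet> v)" for v using min[of v] by (simp add: neg)
  ultimately show ?thesis by (rule that[OF nonneg_eigenvalue_in_singular_values[OF sym w(1) Aw]])
qed

lemma pos_def_sigma_min_pos:
  assumes "pos_def A"
  shows "0 < sigma_min A"
proof -
  obtain \<mu> where "\<mu> \<in> singular_values A" using pos_def_min_eigenvalue[OF assms] .
  then have "sigma_min A \<in> singular_values A"
    unfolding sigma_min_def using finite_singular_values by (intro Min_in) auto
  then show ?thesis by (rule pos_def_singular_values_pos[OF assms])
qed

lemma pos_def_sigma_min_le_form:
  assumes "pos_def A"
  shows "sigma_min A * (v \<bullet> v) \<le> v \<bullet> (A *v v)"
proof -
  obtain \<mu> where \<mu>: "\<mu> \<in> singular_values A" and min: "\<mu> * (v \<bullet> v) \<le> v \<bullet> (A *v v)"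
    using pos_def_min_eigenvalue[OF assms] by metis
  have "sigma_min A \<le> \<mu>" unfolding sigma_min_def by (rule Min_le[OF finite_singular_values \<mu>])
  then show ?thesis using min by (meson inner_ge_zero mult_right_mono order.trans)
qed

lemma pos_def_form_le_sigma_max:
  assumes "pos_def A"
  shows "v \<bullet> (A *v v) \<le> sigma_max A * (v \<bullet> v)"
proof -
  obtain \<mu> where \<mu>: "\<mu> \<in> singular_values A" and max: "v \<bullet> (A *v v) \<le> \<mu> * (v \<bullet> v)"
    using pos_def_max_eigenvalue[OF assms] by metis
  have "\<mu> \<le> sigma_max A" unfolding sigma_max_def by (rule Max_ge[OF finite_singular_values \<mu>])
  then show ?thesis using max by (meson inner_ge_zero mult_right_mono order.trans)
qed

section \<open>Riemann integrable functions are bounded\<close>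

lemma tagged_division_uniform:
  fixes a h :: real
  assumes h: "0 < h" and N: "0 < N"
    and \<tau>: "\<And>k. k < N \<Longrightarrow> \<tau> k \<in> {a + real k * h .. a + real (Suc k) * h}"
  shows "(\<lambda>k. (\<tau> k, {a + real k * h .. a + real (Suc k) * h})) ` {..<N}
           tagged_division_of {a .. a + real N * h}"
  using N \<tau>
proof (induction N)
  case (Suc N)
  show ?case
  proof (cases "N = 0")
    case True
    then show ?thesis using Suc.prems(2)[of 0] by (simp add: lessThan_Suc tagged_division_of_self_real)
  next
    case False
    have "(\<lambda>k. (\<tau> k, {a + real k * h .. a + real (Suc k) * h})) ` {..<N}
            \<union> {(\<tau> N, {a + real N * h .. a + real (Suc N) * h})}
          tagged_division_of ({a .. a + real N * h} \<union> {a + real N * h .. a + real (Suc N) * h})"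
      using False Suc h by (intro tagged_division_Un tagged_division_of_self_real) auto
    moreover have "{a .. a + real N * h} \<union> {a + real N * h .. a + real (Suc N) * h}
                     = {a .. a + real (Suc N) * h}"
      using h by (intro ivl_disj_un_two_touch) (auto simp: algebra_simps)
    ultimately show ?thesis by (simp add: lessThan_Suc Un_commute)
  qed
qed simp

lemma riemann_integrable_on_uniform_sums:
  fixes f :: "real \<Rightarrow> 'a::real_normed_vector"
  assumes f: "riemann_integrable_on f {a..b}" and "a < b" "0 < e"
  obtains N h I where "0 < N" "0 < h" "a + real N * h = b"
    "\<And>\<tau>. (\<And>k. k < N \<Longrightarrow> \<tau> k \<in> {a + real k * h .. a + real (Suc k) * h})
       \<Longrightarrow> norm ((\<Sum>k<N. h *\<^sub>R f (\<tau> k)) - I) < e"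
proof -
  obtain I \<delta> where "0 < \<delta>" and I: "\<And>D. D tagged_division_of {a..b} \<Longrightarrow> (\<forall>(x,K)\<in>D. diameter K < \<delta>)
      \<Longrightarrow> norm ((\<Sum>(x,K)\<in>D. Henstock_Kurzweil_Integration.content K *\<^sub>R f x) - I) < e"
    using f \<open>0 < e\<close> unfolding riemann_integrable_on_def by meson
  obtain N :: nat where N: "(b - a) / \<delta> < real N" using reals_Archimedean2 by blast
  define h where "h = (b - a) / real N"
  have "0 < N" using N \<open>a < b\<close> \<open>0 < \<delta>\<close> by (metis divide_pos_pos diff_gt_0_iff_gt of_nat_0_less_iff order.strict_trans)
  then have h: "0 < h" "a + real N * h = b" "h < \<delta>"
    using N \<open>a < b\<close> \<open>0 < \<delta>\<close> by (simp_all add: h_def field_simps)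
  have "norm ((\<Sum>k<N. h *\<^sub>R f (\<tau> k)) - I) < e"
    if \<tau>: "\<And>k. k < N \<Longrightarrow> \<tau> k \<in> {a + real k * h .. a + real (Suc k) * h}" for \<tau>
  proof -
    define D where "D = (\<lambda>k. (\<tau> k, {a + real k * h .. a + real (Suc k) * h})) ` {..<N}"
    have "D tagged_division_of {a..b}"
      unfolding D_def using tagged_division_uniform[OF h(1) \<open>0 < N\<close> \<tau>] h(2) by simp
    moreover have "\<forall>(x,K)\<in>D. diameter K < \<delta>" using h by (auto simp: D_def algebra_simps)
    moreover have "inj_on (\<lambda>k. (\<tau> k, {a + real k * h .. a + real (Suc k) * h})) {..<N}"
      using h(1) by (intro inj_onI) (auto simp: Icc_eq_Icc)
    then have "(\<Sum>(x,K)\<in>D. Henstock_Kurzweil_Integration.content K *\<^sub>R f x) = (\<Sum>k<N. h *\<^sub>R f (\<tau> k))"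
      using h(1) by (simp add: D_def sum.reindex algebra_simps)
    ultimately show ?thesis using I by metis
  qed
  then show ?thesis using that \<open>0 < N\<close> h by blast
qed

lemma riemann_integrable_on_imp_bounded:
  fixes f :: "real \<Rightarrow> 'a::real_normed_vector"
  assumes f: "riemann_integrable_on f {a..b}"
  shows "bounded (f ` {a..b})"
proof (cases "a < b")
  case True
  obtain N h I where N: "0 < N" and h: "0 < h" "a + real N * h = b"
    and I: "\<And>\<tau>. (\<And>k. k < N \<Longrightarrow> \<tau> k \<in> {a + real k * h .. a + real (Suc k) * h})
              \<Longrightarrow> norm ((\<Sum>k<N. h *\<^sub>R f (\<tau> k)) - I) < 1"
    using riemann_integrable_on_uniform_sums[OF f True zero_less_one] by metis
  define c where "c k = a + real k * h" for k
  \<comment> \<open>the Riemann sums with tags c and c(k := y) are both within 1 of I and differ by h (f y - f (c k))\<close>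
  have "norm (f y) \<le> (\<Sum>k<N. norm (f (c k))) + 2 / h" if y: "y \<in> {a..b}" for y
  proof -
    have grid: "\<And>k. k < N \<Longrightarrow> c k \<in> {a + real k * h .. a + real (Suc k) * h}"
      using h(1) by (simp add: c_def)
    have "(\<lambda>k. (c k, {c k .. c (Suc k)})) ` {..<N} tagged_division_of {a..b}"
      using tagged_division_uniform[OF h(1) N grid] h(2) unfolding c_def by simp
    from tagged_division_ofD(6)[OF this] y
    have "y \<in> \<Union>{K. \<exists>x. (x, K) \<in> (\<lambda>k. (c k, {c k .. c (Suc k)})) ` {..<N}}" by simp
    then obtain k where k: "k < N" "y \<in> {c k .. c (Suc k)}" by auto
    have "(\<Sum>j<N. h *\<^sub>R f ((c(k := y)) j)) - (\<Sum>j<N. h *\<^sub>R f (c j))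
            = (\<Sum>j<N. if j = k then h *\<^sub>R (f y - f (c k)) else 0)"
      unfolding sum_subtractf[symmetric] by (intro sum.cong) (auto simp: scaleR_diff_right)
    then have "h *\<^sub>R (f y - f (c k))
                 = (\<Sum>j<N. h *\<^sub>R f ((c(k := y)) j)) - (\<Sum>j<N. h *\<^sub>R f (c j))"
      using k(1) by simp
    also have "norm \<dots> < 1 + 1"
      using I[of c, OF grid] I[of "c(k := y)"] grid k
      by (intro norm_diff_triangle_less) (auto simp: c_def norm_minus_commute)
    finally have "norm (f y - f (c k)) < 2 / h" using h(1) by (simp add: pos_less_divide_eq mult.commute)
    moreover have "norm (f (c k)) \<le> (\<Sum>j<N. norm (f (c j)))"
      using k(1) by (intro member_le_sum) auto
    ultimately show ?thesis using norm_triangle_sub[of "f y" "f (c k)"] by linarith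
  qed
  then show ?thesis unfolding bounded_iff by blast
next
  case False
  then have "finite {a..b}" by (cases "a = b") auto
  then show ?thesis by (simp add: finite_imp_bounded)
qed

section \<open>Lyapunov functions along integral equations\<close>

lemma quadratic_increments_imp_le:
  fixes V :: "real \<Rightarrow> real"
  assumes "a \<le> b" and incr: "\<And>s u. a \<le> s \<Longrightarrow> s \<le> u \<Longrightarrow> u \<le> b \<Longrightarrow> V u - V s \<le> C * (u - s)\<^sup>2"
  shows "V b \<le> V a"
proof -
  have "V b \<le> V a + C * (b - a)\<^sup>2 / real n" if "0 < n" for n :: nat
  proof -
    define h where "h = (b - a) / real n"
    have h: "0 \<le> h" "a + real n * h = b" using \<open>a \<le> b\<close> \<open>0 < n\<close> by (simp_all add: h_def)
    have "V (a + real k * h) \<le> V a + real k * (C * h\<^sup>2)" if "k \<le> n" for k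
      using that
    proof (induction k)
      case (Suc k)
      have "real (Suc k) * h \<le> real n * h" using Suc.prems h(1) by (intro mult_right_mono) auto
      then have "V (a + real (Suc k) * h) - V (a + real k * h) \<le> C * h\<^sup>2"
        using incr[of "a + real k * h" "a + real (Suc k) * h"] h by (simp add: algebra_simps)
      then show ?case using Suc by (simp add: algebra_simps)
    qed simp
    from this[of n] show ?thesis using h(2) \<open>0 < n\<close> by (simp add: h_def power2_eq_square)
  qed
  moreover have "(\<lambda>n. V a + C * (b - a)\<^sup>2 / real n) \<longlonglongrightarrow> V a"
    using tendsto_add[OF tendsto_const lim_const_over_n] by simp
  ultimately show ?thesis by (intro LIMSEQ_le_const[of _ "V a"]) (auto intro!: exI[of _ 1])
qed

lemma has_integral_primitive_diff:
  fixes f y :: "real \<Rightarrow> 'a::banach"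
  assumes y: "\<And>t. t \<in> {a..b} \<Longrightarrow> (f has_integral (y t - y a)) {a..t}"
    and "a \<le> s" "s \<le> u" "u \<le> b"
  shows "(f has_integral (y u - y s)) {s..u}"
proof -
  have ys: "(f has_integral (y s - y a)) {a..s}" and yu: "(f has_integral (y u - y a)) {a..u}"
    using assms by (intro y; simp)+
  have "f integrable_on {s..u}"
    by (rule integrable_subinterval_real[OF has_integral_integrable[OF yu]]) (use assms in auto)
  then have J: "(f has_integral integral {s..u} f) {s..u}" by (rule integrable_integral)
  have "(f has_integral ((y s - y a) + integral {s..u} f)) {a..u}"
    using assms by (intro has_integral_combine[OF _ _ ys J]) auto
  then have "(y s - y a) + integral {s..u} f = y u - y a" using yu by (rule has_integral_unique)
  then have "y u = y s + integral {s..u} f" by (simp add: algebra_simps)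
  with J show ?thesis by simp
qed

lemma continuous_on_primitive:
  fixes f y :: "real \<Rightarrow> 'a::banach"
  assumes y: "\<And>t. t \<in> {a..b} \<Longrightarrow> (f has_integral (y t - y a)) {a..t}"
  shows "continuous_on {a..b} y"
proof (cases "a \<le> b")
  case True
  then have "f integrable_on {a..b}" using y[of b] by (auto simp: integrable_on_def)
  then have "continuous_on {a..b} (\<lambda>t. y a + integral {a..t} f)"
    by (intro continuous_intros indefinite_integral_continuous_1)
  then show ?thesis
  proof (rule continuous_on_eq)
    fix t assume "t \<in> {a..b}"
    then show "y a + integral {a..t} f = y t" using integral_unique[OF y[of t]] by simp
  qed
qed simp

lemma primitive_lipschitz:
  fixes f y :: "real \<Rightarrow> 'a::banach"
  assumes y: "\<And>t. t \<in> {a..b} \<Longrightarrow> (f has_integral (y t - y a)) {a..t}"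
    and G: "\<And>w. w \<in> {a..b} \<Longrightarrow> norm (f w) \<le> G" "0 \<le> G"
    and "a \<le> s" "s \<le> u" "u \<le> b"
  shows "norm (y u - y s) \<le> G * (u - s)"
  using has_integral_bound[OF G(2), of f "y u - y s" s u] has_integral_primitive_diff[OF y] G(1) assms(4-6)
  by auto

lemma lyapunov_increment:
  fixes B :: "'a::banach \<Rightarrow> 'a \<Rightarrow> real" and y f :: "real \<Rightarrow> 'a"
  assumes B: "bounded_bilinear B" and B_sym: "\<And>p q. B p q = B q p"
    and K: "\<And>p q. norm (B p q) \<le> norm p * norm q * K" "0 \<le> K"
    and y: "\<And>t. t \<in> {a..b} \<Longrightarrow> (f has_integral (y t - y a)) {a..t}"
    and G: "\<And>w. w \<in> {a..b} \<Longrightarrow> norm (f w) \<le> G" "0 \<le> G"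
    and dissipative: "\<And>w. w \<in> {a..b} \<Longrightarrow> B (y w) (f w) \<le> 0"
    and su: "a \<le> s" "s \<le> u" "u \<le> b"
  shows "B (y u) (y u) - B (y s) (y s) \<le> 3 * K * G\<^sup>2 * (u - s)\<^sup>2"
proof -
  interpret B: bounded_bilinear B by (rule B)
  have lipschitz: "norm (y v - y w) \<le> G * (v - w)" if "a \<le> w" "w \<le> v" "v \<le> b" for v w
    using y G that by (rule primitive_lipschitz)
  define d where "d = y u - y s"
  \<comment> \<open>B(y s, d) is the integral of B(y s, f), which exceeds the nonpositive B(y w, f w)
    by O(u - s) since y is Lipschitz\<close>
  have "B (y u) (y u) - B (y s) (y s) = 2 * B (y s) d + B d d"
    using B_sym[of d "y s"] by (simp add: d_def B.diff_left B.diff_right)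
  moreover have "B d d \<le> K * G\<^sup>2 * (u - s)\<^sup>2"
  proof -
    have "B d d \<le> norm d * norm d * K" using K(1)[of d d] by simp
    also have "\<dots> \<le> (G * (u - s)) * (G * (u - s)) * K"
      using lipschitz[OF su] su K(2) G(2) by (intro mult_right_mono mult_mono) (auto simp: d_def)
    finally show ?thesis by (simp add: power2_eq_square algebra_simps)
  qed
  moreover have "B (y s) d \<le> K * G\<^sup>2 * (u - s)\<^sup>2"
  proof -
    have integral: "((\<lambda>w. B (y s) (f w)) has_integral B (y s) d) {s..u}"
      using has_integral_linear[OF has_integral_primitive_diff[OF y su] B.bounded_linear_right]
      by (simp add: d_def o_def)
    have pointwise: "B (y s) (f w) \<le> K * G\<^sup>2 * (u - s)" if "w \<in> {s..u}" for w
    proof -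
      have "B (y s) (f w) = B (y w) (f w) + B (y s - y w) (f w)" by (simp add: B.diff_left)
      also have "\<dots> \<le> norm (y w - y s) * norm (f w) * K"
        using dissipative[of w] K(1)[of "y s - y w" "f w"] that su by (simp add: norm_minus_commute)
      also have "\<dots> \<le> (G * (u - s)) * G * K"
      proof -
        have "norm (y w - y s) \<le> G * (w - s)" using lipschitz that su by auto
        also have "\<dots> \<le> G * (u - s)" using that G(2) by (intro mult_left_mono) auto
        finally show ?thesis
          using G that su K(2) by (intro mult_right_mono mult_mono) auto
      qed
      finally show ?thesis by (simp add: power2_eq_square algebra_simps)
    qed
    have const: "((\<lambda>w. K * G\<^sup>2 * (u - s)) has_integral (u - s) * (K * G\<^sup>2 * (u - s))) {s..u}"
      using has_integral_const_real[of "K * G\<^sup>2 * (u - s)" s u] su by simp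
    have "B (y s) d \<le> (u - s) * (K * G\<^sup>2 * (u - s))"
      by (rule has_integral_le[OF integral const pointwise])
    then show ?thesis by (simp add: power2_eq_square algebra_simps)
  qed
  ultimately show ?thesis by simp
qed

lemma lyapunov_nonincreasing:
  fixes B :: "'a::banach \<Rightarrow> 'a \<Rightarrow> real" and y f :: "real \<Rightarrow> 'a"
  assumes B: "bounded_bilinear B" and B_sym: "\<And>p q. B p q = B q p"
    and y: "\<And>t. t \<in> {a..b} \<Longrightarrow> (f has_integral (y t - y a)) {a..t}"
    and f: "bounded (f ` {a..b})"
    and dissipative: "\<And>w. w \<in> {a..b} \<Longrightarrow> B (y w) (f w) \<le> 0"
    and "a \<le> b"
  shows "B (y b) (y b) \<le> B (y a) (y a)"
proof -
  obtain G where "0 \<le> G" and "\<forall>w\<in>{a..b}. norm (f w) \<le> G"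
    using f unfolding bounded_pos by (auto intro: less_imp_le)
  then have G: "\<And>w. w \<in> {a..b} \<Longrightarrow> norm (f w) \<le> G" by blast
  obtain K where K: "\<And>p q. norm (B p q) \<le> norm p * norm q * K" and "0 \<le> K"
    using bounded_bilinear.nonneg_bounded[OF B] by blast
  show ?thesis
    using lyapunov_increment[OF B B_sym K \<open>0 \<le> K\<close> y G \<open>0 \<le> G\<close> dissipative]
    by (rule quadratic_increments_imp_le[OF \<open>a \<le> b\<close>])
qed

section \<open>Matrix algebra\<close>

lemma bounded_bilinear_matrix_mult:
  "bounded_bilinear ((**) :: real^'n^'m \<Rightarrow> real^'k^'n \<Rightarrow> real^'k^'m)"
  unfolding bilinear_conv_bounded_bilinear[symmetric] bilinear_def linear_iff
  by (simp add: matrix_matrix_mult_def vec_eq_iff sum.distrib algebra_simps sum_distrib_left)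

lemmas matrix_mult_add_left = bounded_bilinear.add_left[OF bounded_bilinear_matrix_mult]
lemmas matrix_mult_diff_left = bounded_bilinear.diff_left[OF bounded_bilinear_matrix_mult]
lemmas matrix_mult_diff_right = bounded_bilinear.diff_right[OF bounded_bilinear_matrix_mult]
lemmas matrix_mult_minus_left = bounded_bilinear.minus_left[OF bounded_bilinear_matrix_mult]
lemmas matrix_mult_minus_right = bounded_bilinear.minus_right[OF bounded_bilinear_matrix_mult]

lemma matrix_matrix_mult_row: "((A :: real^'n^'m) ** B) $ i = (\<Sum>j\<in>UNIV. A$i$j *\<^sub>R B$j)"
  by (simp add: vec_eq_iff matrix_matrix_mult_def)

lemma vector_matrix_mult_rows: "(x :: real^'n) v* B = (\<Sum>j\<in>UNIV. x$j *\<^sub>R B$j)"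
  by (simp add: vec_eq_iff vector_matrix_mult_def mult.commute)

lemma matrix_mult_sym_row:
  assumes "sym_matrix Q"
  shows "(M ** Q) $ i = Q *v M $ i"
  using assms by (simp add: sym_matrix_def vec_eq_iff matrix_matrix_mult_def matrix_vector_mult_def
      transpose_def mult.commute)

lemma trace_transpose: "trace (transpose A) = trace A"
  by (simp add: trace_def transpose_def)

lemma inner_matrix_eq_trace: "(Y :: real^'n^'m) \<bullet> Z = trace (transpose Y ** Z)"
  by (simp add: inner_vec_def trace_def matrix_matrix_mult_def transpose_def) (rule sum.swap)

lemma trace_mult_transpose_eq_sum:
  "trace ((Z :: real^'n^'m) ** Q ** transpose Z) = (\<Sum>i\<in>UNIV. Z$i \<bullet> (Q *v Z$i))"
  by (simp add: trace_def matrix_matrix_mult_def transpose_def inner_vec_def matrix_vector_mult_def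
      sum_distrib_left sum_distrib_right) (rule sum.cong[OF refl], subst sum.swap, simp add: mult_ac)

lemma inner_matrix_columns: "(Y :: real^'n^'m) \<bullet> Z = (\<Sum>k\<in>UNIV. column k Y \<bullet> column k Z)"
  by (simp add: inner_vec_def column_def) (rule sum.swap)

lemma column_matrix_mult: "column k ((A :: real^'n^'m) ** B) = A *v column k B"
  by (simp add: vec_eq_iff column_def matrix_matrix_mult_def matrix_vector_mult_def)

lemma sym_matrix_inner_mult_commute:
  assumes "sym_matrix W"
  shows "Y \<bullet> (W ** Z) = Z \<bullet> (W ** Y)"
  using sym_matrix_inner_commute[OF assms]
  by (simp add: inner_matrix_columns[of Y] inner_matrix_columns[of Z] column_matrix_mult)

lemma inner_mult_pos_semidef_nonpos:
  fixes M :: "real^'p^'p" and Q :: "real^'n^'n" and Z :: "real^'n^'p"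
  assumes M: "M + transpose M = - mat 1" and Q: "pos_semidef Q"
  shows "Z \<bullet> (M ** Z ** Q) \<le> 0"
proof -
  define t where "t N = trace (transpose Z ** N ** Z ** Q)" for N :: "real^'p^'p"
  have "transpose Q = Q" using Q by (simp add: pos_semidef_def sym_matrix_def)
  then have "t M = trace (Q ** (transpose Z ** transpose M ** Z))"
    unfolding t_def trace_transpose[of "transpose Z ** M ** Z ** Q", symmetric]
    by (simp add: matrix_transpose_mul matrix_mul_assoc)
  also have "\<dots> = t (transpose M)" by (subst trace_mul_sym) (simp add: t_def matrix_mul_assoc)
  finally have "t M = t (transpose M)" .
  moreover have "t M + t (transpose M) = - trace (Z ** Q ** transpose Z)"
  proof -
    have "t M + t (transpose M) = t (M + transpose M)"
      by (simp add: t_def trace_add matrix_mult_add_left matrix_add_ldistrib)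
    also have "\<dots> = - trace (transpose Z ** Z ** Q)"
      using M by (simp add: t_def matrix_mult_minus_left matrix_mult_minus_right trace_def sum_negf)
    also have "trace (transpose Z ** Z ** Q) = trace (Z ** Q ** transpose Z)"
      using trace_mul_sym[of "transpose Z" "Z ** Q"] by (simp add: matrix_mul_assoc)
    finally show ?thesis .
  qed
  moreover have "0 \<le> trace (Z ** Q ** transpose Z)"
    using Q by (simp add: trace_mult_transpose_eq_sum pos_semidef_def sum_nonneg)
  ultimately show ?thesis by (simp add: t_def inner_matrix_eq_trace matrix_mul_assoc)
qed

lemma pos_def_inner_mult_bounds:
  fixes Z :: "real^'n^'p"
  assumes "pos_def W"
  shows "sigma_min W * (norm Z)\<^sup>2 \<le> Z \<bullet> (W ** Z)" and "Z \<bullet> (W ** Z) \<le> sigma_max W * (norm Z)\<^sup>2"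
  unfolding power2_norm_eq_inner inner_matrix_columns[of Z] column_matrix_mult sum_distrib_left
  using pos_def_sigma_min_le_form[OF assms] pos_def_form_le_sigma_max[OF assms]
  by (auto intro: sum_mono)

lemma pos_def_norm_le_of_inner_mult_le:
  fixes Y Z :: "real^'n^'p"
  assumes "pos_def W" and "Y \<bullet> (W ** Y) \<le> Z \<bullet> (W ** Z)"
  shows "norm Y \<le> sqrt (sigma_max W / sigma_min W * (norm Z)\<^sup>2)"
proof -
  have "sigma_min W * (norm Y)\<^sup>2 \<le> sigma_max W * (norm Z)\<^sup>2"
    using pos_def_inner_mult_bounds[OF assms(1)] assms(2) by (meson order_trans)
  then have "(norm Y)\<^sup>2 \<le> sigma_max W / sigma_min W * (norm Z)\<^sup>2"
    using pos_def_sigma_min_pos[OF assms(1)] by (simp add: field_simps)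
  then show ?thesis by (simp add: real_le_rsqrt)
qed

lemma bounded_bilinear_image:
  assumes "bounded_bilinear h" "bounded (f ` S)" "bounded (g ` S)"
  shows "bounded ((\<lambda>s. h (f s) (g s)) ` S)"
proof -
  obtain K where K: "\<And>a b. norm (h a b) \<le> norm a * norm b * K" and "0 \<le> K"
    using bounded_bilinear.nonneg_bounded[OF assms(1)] by blast
  obtain F G where F: "\<forall>s\<in>S. norm (f s) \<le> F" and G: "\<forall>s\<in>S. norm (g s) \<le> G"
    using assms(2,3) unfolding bounded_iff by auto
  have "norm (h (f s) (g s)) \<le> F * G * K" if "s \<in> S" for s
  proof -
    have "norm (f s) * norm (g s) \<le> F * G"
      using F G that by (intro mult_mono) (auto intro: order_trans[OF norm_ge_zero])
    then show ?thesis using K[of "f s" "g s"] \<open>0 \<le> K\<close> by (meson mult_right_mono order_trans)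
  qed
  then show ?thesis unfolding bounded_iff by blast
qed

lemma bounded_matrix_mult_image:
  fixes A :: "real^'n^'m" and Y :: "'s \<Rightarrow> real^'k^'n" and R :: "'s \<Rightarrow> real^'l^'k"
  assumes "bounded (Y ` S)" "bounded (R ` S)"
  shows "bounded ((\<lambda>s. A ** Y s ** R s) ` S)"
  by (rule bounded_bilinear_image[OF bounded_bilinear.comp1[OF bounded_bilinear_matrix_mult
        bounded_bilinear.bounded_linear_right[OF bounded_bilinear_matrix_mult]] assms])

lemma bounded_bilinear_inner_matrix_mult:
  "bounded_bilinear (\<lambda>Y Z :: real^'n^'m. Y \<bullet> (W ** Z))"
  by (rule bounded_bilinear.comp[OF bounded_bilinear_inner bounded_linear_ident
        bounded_bilinear.bounded_linear_right[OF bounded_bilinear_matrix_mult]])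

lemma has_integral_vec_lambda:
  fixes f :: "real \<Rightarrow> 'i::finite \<Rightarrow> 'a::euclidean_space"
  assumes "\<And>i. ((\<lambda>s. f s i) has_integral y i) S"
  shows "((\<lambda>s. \<chi> i. f s i) has_integral (\<chi> i. y i)) S"
  unfolding has_integral_componentwise_iff[where f = "\<lambda>s. \<chi> i. f s i"]
proof
  fix b :: "'a^'i" assume "b \<in> Basis"
  then obtain i u where "b = axis i u" "u \<in> Basis" by (auto simp: Basis_vec_def)
  moreover have "((\<lambda>s. f s i \<bullet> u) has_integral y i \<bullet> u) S"
    using has_integral_componentwise_iff[of "\<lambda>s. f s i", THEN iffD1, OF assms[of i]] \<open>u \<in> Basis\<close>
    by blast
  ultimately show "((\<lambda>s. (\<chi> i. f s i) \<bullet> b) has_integral (\<chi> i. y i) \<bullet> b) S"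
    by (simp add: inner_axis)
qed

section \<open>Consensus dynamics\<close>

lemma ct_interconnection_row_sum:
  assumes "ct_interconnection \<Gamma>"
  shows "(\<Sum>j\<in>UNIV. \<Gamma>$i$j) = 0"
  using assms by (simp add: ct_interconnection_def sum.remove[of UNIV i])

lemma ct_interconnection_diffusive_coupling:
  fixes \<Gamma> :: "real^'p^'p" and X :: "real^'n^'p"
  assumes "ct_interconnection \<Gamma>"
  shows "(\<Sum>j\<in>UNIV - {i}. \<Gamma>$i$j *\<^sub>R (X$j - X$i)) = (\<Gamma> ** X)$i"
proof -
  have "(\<Sum>j\<in>UNIV - {i}. \<Gamma>$i$j *\<^sub>R (X$j - X$i))
          = (\<Sum>j\<in>UNIV - {i}. \<Gamma>$i$j *\<^sub>R X$j) - (\<Sum>j\<in>UNIV - {i}. \<Gamma>$i$j) *\<^sub>R X$i"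
    by (simp add: scaleR_diff_right sum_subtractf scaleR_sum_left)
  also have "\<dots> = (\<Sum>j\<in>UNIV. \<Gamma>$i$j *\<^sub>R X$j)"
    using assms by (simp add: ct_interconnection_def sum.remove[of UNIV i])
  finally show ?thesis by (simp add: matrix_matrix_mult_row)
qed

lemma ct_interconnection_mult_const_rows:
  fixes \<Gamma> :: "real^'p^'p"
  assumes "ct_interconnection \<Gamma>"
  shows "\<Gamma> ** (\<chi> i. v) = 0"
  using ct_interconnection_row_sum[OF assms]
  by (simp add: vec_eq_iff matrix_matrix_mult_row scaleR_sum_left[symmetric])

lemma const_rows_mult: "(\<chi> i. r) ** M = (\<chi> i. r v* M)"
  by (simp add: vec_eq_iff matrix_matrix_mult_def vector_matrix_mult_def mult.commute)

lemma left_null_vector_conserved: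
  fixes \<Gamma> :: "real^'p^'p" and X :: "real \<Rightarrow> real^'n^'p" and Q :: "real \<Rightarrow> real^'n^'n"
  assumes "r v* \<Gamma> = 0" and "((\<lambda>s. \<Gamma> ** X s ** Q s) has_integral (X t - X 0)) {0..t}"
  shows "r v* X t = r v* X 0"
proof -
  have "bounded_linear (\<lambda>M :: real^'n^'p. r v* M)"
    by (simp add: linear_conv_bounded_linear[symmetric] linear_iff vector_matrix_mult_add_rdistrib
        vector_scaleR_matrix_ac)
  from has_integral_linear[OF assms(2) this]
  have "((\<lambda>s. 0) has_integral r v* (X t - X 0)) {0..t}"
    using assms(1) by (simp add: o_def vector_matrix_mul_assoc[symmetric])
  then show ?thesis by (simp add: vector_matrix_mult_diff_rdistrib)
qed

lemma consensus_error_coupling: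
  fixes \<Gamma> :: "real^'p^'p" and X X0 :: "real^'n^'p"
  assumes "ct_interconnection \<Gamma>" and "r \<bullet> (\<chi> i. 1) = 1" and "r v* X = r v* X0"
  shows "(\<Gamma> - (\<chi> i j. r$j)) ** (X - (\<chi> i. r v* X0)) = \<Gamma> ** X"
proof -
  have "r v* (\<chi> i. r v* X0) = r v* X0"
    using assms(2) by (simp add: vector_matrix_mult_rows scaleR_sum_left[symmetric] inner_vec_def)
  then show ?thesis
    using assms(3)
    by (simp add: matrix_mult_diff_left matrix_mult_diff_right const_rows_mult
        ct_interconnection_mult_const_rows[OF assms(1)])
qed

definition consensus_error :: "real^'p \<Rightarrow> (real \<Rightarrow> 'p \<Rightarrow> real^'n) \<Rightarrow> real \<Rightarrow> real^'n^'p" where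
  "consensus_error r x t = (\<chi> j. x t j - (\<Sum>k\<in>UNIV. r$k *\<^sub>R x 0 k))"

lemma consensus_error_equation:
  fixes \<Gamma> :: "real^'p^'p" and Q :: "real \<Rightarrow> real^'n^'n" and x :: "real \<Rightarrow> 'p \<Rightarrow> real^'n"
  assumes \<Gamma>: "ct_interconnection \<Gamma>" and r: "r v* \<Gamma> = 0" "r \<bullet> (\<chi> i. 1) = 1"
    and Q: "\<forall>t\<ge>0. pos_semidef (Q t)"
    and x: "\<forall>t\<ge>0. \<forall>i. ((\<lambda>s. Q s *v (\<Sum>j\<in>UNIV - {i}. \<Gamma>$i$j *\<^sub>R (x s j - x s i)))
                      has_integral (x t i - x 0 i)) {0..t}"
    and "0 \<le> t"
  shows "((\<lambda>s. (\<Gamma> - (\<chi> i j. r$j)) ** consensus_error r x s ** Q s)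
           has_integral (consensus_error r x t - consensus_error r x 0)) {0..t}"
proof -
  define X where "X s = (\<chi> j. x s j)" for s
  have "(\<Gamma> ** X s)$i = (\<Sum>j\<in>UNIV - {i}. \<Gamma>$i$j *\<^sub>R (x s j - x s i))" for s i
    using ct_interconnection_diffusive_coupling[OF \<Gamma>, where X = "X s"] by (simp add: X_def)
  then have row: "\<Gamma> ** X s ** Q s = (\<chi> i. Q s *v (\<Sum>j\<in>UNIV - {i}. \<Gamma>$i$j *\<^sub>R (x s j - x s i)))"
    if "0 \<le> s" for s
    using that Q by (intro vec_eq_iff[THEN iffD2] allI) (simp add: matrix_mult_sym_row pos_semidef_def)
  have ode: "((\<lambda>s. \<Gamma> ** X s ** Q s) has_integral (X u - X 0)) {0..u}" if "0 \<le> u" for u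
  proof -
    have vec: "((\<lambda>s. \<chi> i. Q s *v (\<Sum>j\<in>UNIV - {i}. \<Gamma>$i$j *\<^sub>R (x s j - x s i)))
                 has_integral (\<chi> i. x u i - x 0 i)) {0..u}"
      by (rule has_integral_vec_lambda) (use x that in auto)
    have "X u - X 0 = (\<chi> i. x u i - x 0 i)" by (simp add: X_def vec_eq_iff)
    then show ?thesis by (simp only:) (rule has_integral_eq[OF _ vec], simp add: row)
  qed
  have E: "consensus_error r x s = X s - (\<chi> i. r v* X 0)" for s
    by (simp add: consensus_error_def X_def vec_eq_iff vector_matrix_mult_rows)
  have "\<Gamma> ** X s ** Q s = (\<Gamma> - (\<chi> i j. r$j)) ** consensus_error r x s ** Q s"
    if "s \<in> {0..t}" for s
    using consensus_error_coupling[OF \<Gamma> r(2) left_null_vector_conserved[OF r(1) ode]] that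
    by (simp only: E atLeastAtMost_iff)
  then have "((\<lambda>s. (\<Gamma> - (\<chi> i j. r$j)) ** consensus_error r x s ** Q s) has_integral (X t - X 0)) {0..t}"
    by (rule has_integral_eq[OF _ ode[OF \<open>0 \<le> t\<close>]])
  then show ?thesis by (simp add: E)
qed

theorem theorem2:
  fixes \<Gamma> :: "real^'p^'p" and r :: "real^'p" and \<Omega> :: "real^'p^'p"
    and Q :: "real \<Rightarrow> real^'n^'n" and x :: "real \<Rightarrow> 'p \<Rightarrow> real^'n"
  assumes "ct_interconnection \<Gamma>" and "ic_connected \<Gamma>"
    and "r v* \<Gamma> = 0" and "r \<bullet> (\<chi> i. 1) = 1"
    and "pos_def \<Omega>"
    and "transpose (\<Gamma> - (\<chi> i j. r$j)) ** \<Omega> + \<Omega> ** (\<Gamma> - (\<chi> i j. r$j)) = - mat 1"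
    and "\<forall>T\<ge>0. riemann_integrable_on Q {0..T}"
    and "\<forall>t\<ge>0. pos_semidef (Q t)"
    and "\<forall>t\<ge>0. \<forall>i. ((\<lambda>s. Q s *v (\<Sum>j\<in>UNIV - {i}. \<Gamma>$i$j *\<^sub>R (x s j - x s i)))
                      has_integral (x t i - x 0 i)) {0..t}"
  shows "\<forall>t\<ge>0. \<forall>i. norm (x t i - (\<Sum>j\<in>UNIV. r$j *\<^sub>R x 0 j))
           \<le> sqrt (sigma_max \<Omega> / sigma_min \<Omega> *
                   (\<Sum>j\<in>UNIV. (norm (x 0 j - (\<Sum>k\<in>UNIV. r$k *\<^sub>R x 0 k)))\<^sup>2))"
proof (intro allI impI)
  fix t :: real and i :: 'p
  assume "0 \<le> t"
  define A where "A = \<Gamma> - (\<chi> i j. r$j)"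
  define E where "E = consensus_error r x"
  have ode: "((\<lambda>s. A ** E s ** Q s) has_integral (E u - E 0)) {0..u}" if "u \<in> {0..t}" for u
    using consensus_error_equation[OF assms(1,3,4,8,9)] that by (simp add: A_def E_def)
  have "bounded (E ` {0..t})"
    by (intro compact_imp_bounded compact_continuous_image continuous_on_primitive[OF ode]) auto
  moreover have "bounded (Q ` {0..t})" using assms(7) \<open>0 \<le> t\<close> by (simp add: riemann_integrable_on_imp_bounded)
  ultimately have bounded: "bounded ((\<lambda>s. A ** E s ** Q s) ` {0..t})" by (rule bounded_matrix_mult_image)
  have sym: "sym_matrix \<Omega>" using assms(5) by (simp add: pos_def_def)
  have "\<Omega> ** A + transpose (\<Omega> ** A) = - mat 1"
    using assms(6) sym by (simp add: A_def matrix_transpose_mul sym_matrix_def add.commute)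
  then have "E s \<bullet> (\<Omega> ** (A ** E s ** Q s)) \<le> 0" if "s \<in> {0..t}" for s
    using inner_mult_pos_semidef_nonpos[of "\<Omega> ** A" "Q s" "E s"] assms(8) that by (simp add: matrix_mul_assoc)
  then have "E t \<bullet> (\<Omega> ** E t) \<le> E 0 \<bullet> (\<Omega> ** E 0)"
    using \<open>0 \<le> t\<close> by (intro lyapunov_nonincreasing[OF bounded_bilinear_inner_matrix_mult
        sym_matrix_inner_mult_commute[OF sym] ode bounded]) auto
  then have "norm (E t) \<le> sqrt (sigma_max \<Omega> / sigma_min \<Omega> * (norm (E 0))\<^sup>2)"
    by (rule pos_def_norm_le_of_inner_mult_le[OF assms(5)])
  moreover have "(norm (E 0))\<^sup>2 = (\<Sum>j\<in>UNIV. (norm (x 0 j - (\<Sum>k\<in>UNIV. r$k *\<^sub>R x 0 k)))\<^sup>2)"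
    by (simp add: E_def consensus_error_def norm_vec_def L2_set_def sum_nonneg)
  moreover have "norm (E t $ i) \<le> norm (E t)" by (rule Finite_Cartesian_Product.norm_nth_le)
  ultimately show "norm (x t i - (\<Sum>j\<in>UNIV. r$j *\<^sub>R x 0 j))
           \<le> sqrt (sigma_max \<Omega> / sigma_min \<Omega> *
                   (\<Sum>j\<in>UNIV. (norm (x 0 j - (\<Sum>k\<in>UNIV. r$k *\<^sub>R x 0 k)))\<^sup>2))"
    by (simp add: E_def consensus_error_def)
qed

end
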